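(* Let $f(z)=z\big(1+\sum_{n\ge1}c_nz^n\big)$ be holomorphic and univalent in the unit disc and let $\Lambda_p$ ($p\ge0$) be as defined in the context. Define polynomials $F_n(w)$ ($n\ge0$) by $$\frac{zf'(z)}{f(z)-wf(z)^2}=1+\sum_{n\ge1}F_n(w)z^n,\qquad F_0(w)=1,$$ (these are the Faber polynomials of $h(z)=1/f(1/z)$), define $T_n(w)$ by $$\frac{zf'(z)^2}{f(z)-wf(z)^2}=1+\sum_{n\ge1}T_n(w)z^n,\qquad T_0(w)=1,$$ and define constants $a_p^p$ by $$\frac{z^2f'(z)^2}{f(z)^2}=1+\sum_{p\ge1}a_p^pz^p.$$ Then: (1) for every $p\ge1$, $T_{p-1}(w)=F_{p-1}(w)+2c_1F_{p-2}(w)+3c_2F_{p-3}(w)+\cdots+(p-1)c_{p-2}F_1(w)+pc_{p-1}$; (2) for every $p\ge1$ and $u\neq0$, $\Lambda_p(u)+a_p^p\,u=-T_{p-1}(1/u)$; (3) for every fixed $u\neq0$, in a neighborhood of $\xi=0$, $$\frac{\xi^2f'(\xi)^2}{f(\xi)^2}\,\frac{u^2}{f(\xi)-u}=\sum_{p\ge0}\Lambda_p(u)\,\xi^p.$$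
   Context: For $p\ge0$, $\Lambda_p$ denotes the unique function of the form $\Lambda_p(u)=-u^{1-p}+\sum_{j=0}^{p-1}\alpha_ju^{1-j}$ (constants $\alpha_j$ depending on $f$) such that the Laurent expansion at $z=0$ of $z^{1-p}f'(z)+\Lambda_p(f(z))$ contains only powers $z^n$ with $n\ge2$. In particular $\Lambda_0(u)=-u$. *)

theory Defs
  imports "HOL-Analysis.Analysis"
begin

text \<open>Coefficients of the power series expansion of g at 0, valid on a punctured
  disc around 0 (the expressions below are formally 0/0 at z = 0, their
  singularity at 0 being removable).\<close>
definition expansion0 :: "(complex \<Rightarrow> complex) \<Rightarrow> nat \<Rightarrow> complex" where
  "expansion0 g = (THE a. \<exists>r>0. \<forall>z\<in>ball 0 r - {0}. (\<lambda>n. a n * z ^ n) sums g z)"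

definition Lambda_form :: "nat \<Rightarrow> (nat \<Rightarrow> complex) \<Rightarrow> complex \<Rightarrow> complex" where
  "Lambda_form p \<alpha> u = - (u powi (1 - int p)) + (\<Sum>j<p. \<alpha> j * u powi (1 - int j))"

definition Lambda_cond :: "(complex \<Rightarrow> complex) \<Rightarrow> nat \<Rightarrow> (complex \<Rightarrow> complex) \<Rightarrow> bool" where
  "Lambda_cond f p L \<longleftrightarrow> (\<exists>a. \<exists>r>0. \<forall>z\<in>ball 0 r - {0}.
      (\<lambda>n. a n * z ^ (n + 2)) sums (z powi (1 - int p) * deriv f z + L (f z)))"

definition Lambda :: "(complex \<Rightarrow> complex) \<Rightarrow> nat \<Rightarrow> complex \<Rightarrow> complex" where
  "Lambda f p = (THE L. (\<exists>\<alpha>. L = Lambda_form p \<alpha>) \<and> Lambda_cond f p L)"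

definition Fpoly :: "(complex \<Rightarrow> complex) \<Rightarrow> nat \<Rightarrow> complex \<Rightarrow> complex" where
  "Fpoly f n w = expansion0 (\<lambda>z. z * deriv f z / (f z - w * (f z)^2)) n"

definition Tpoly :: "(complex \<Rightarrow> complex) \<Rightarrow> nat \<Rightarrow> complex \<Rightarrow> complex" where
  "Tpoly f n w = expansion0 (\<lambda>z. z * (deriv f z)^2 / (f z - w * (f z)^2)) n"

definition acoef :: "(complex \<Rightarrow> complex) \<Rightarrow> nat \<Rightarrow> complex" where
  "acoef f p = expansion0 (\<lambda>z. z^2 * (deriv f z)^2 / (f z)^2) p"

end

theory Submission
  imports Defs "HOL-Complex_Analysis.Laurent_Convergence"
begin

(* Write f(z) = z U(z) with U(0) = 1, and let F = X U, D = F', V = 1/U be the formal power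
   series of f, f' and z/f(z).  Every quantity in the theorem is a coefficient of a formal
   series built from these: F_n, T_n and a_p^p are the coefficients of D V W_w, D^2 V W_w and
   D^2 V^2, where W_w is the series of 1/(1 - w f).  The heart of the argument is the formal
   residue calculus for the powers of F: the coefficient of X^q in F^i D V^(q+1) is the
   Kronecker delta (the residue of f^i f'/f^(q+1)).  It shows that a series agrees with a
   combination of 1, F, ..., F^n up to order n iff the coefficients are its residue pairings,
   which identifies Lambda_p(u) = - sum_{k<=p} B_pk u^(1-k) with B_pk = [X^p] D^2 V^2 F^k.
   A geometric-series computation turns this into Lambda_p(u) = -u [X^p] D^2 V^2 W_(1/u),
   from which all three parts follow. *)

unbundle no vec_syntax
unbundle fps_syntax

lemma eventually_at_0_iff_punctured_ball:
  "eventually P (at (0::'a::real_normed_vector)) \<longleftrightarrow> (\<exists>r>0. \<forall>z\<in>ball 0 r - {0}. P z)"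
  unfolding eventually_at by (simp add: dist_norm Ball_def conj_commute)

lemma has_laurent_expansion_fps_iff_sums:
  fixes g :: "complex \<Rightarrow> complex" and A :: "complex fps"
  shows "g has_laurent_expansion fps_to_fls A \<longleftrightarrow>
         eventually (\<lambda>z. (\<lambda>n. A $ n * z ^ n) sums g z) (at 0)"
proof
  assume A: "g has_laurent_expansion fps_to_fls A"
  hence "fps_conv_radius A > 0" by (simp add: has_laurent_expansion_def)
  hence "eventually (\<lambda>z. z \<in> eball 0 (fps_conv_radius A)) (at 0)"
    by (intro eventually_at_in_open') (auto simp: zero_ereal_def)
  moreover have "eventually (\<lambda>z. eval_fls (fps_to_fls A) z = g z) (at 0)"
    using A by (simp add: has_laurent_expansion_def)
  ultimately show "eventually (\<lambda>z. (\<lambda>n. A $ n * z ^ n) sums g z) (at 0)"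
    by eventually_elim (metis eval_fps_to_fls sums_eval_fps in_eball_iff dist_0_norm)
next
  assume S: "eventually (\<lambda>z. (\<lambda>n. A $ n * z ^ n) sums g z) (at 0)"
  obtain z where z: "z \<noteq> 0" "(\<lambda>n. A $ n * z ^ n) sums g z"
    using eventually_happens[OF eventually_conj[OF S eventually_neq_at_within[of 0 0 UNIV]]] by auto
  have "ereal 0 < norm z" using z(1) by simp
  also have "norm z \<le> fps_conv_radius A"
    unfolding fps_conv_radius_def using z(2) by (intro conv_radius_geI) (auto simp: sums_iff)
  finally have r: "fps_conv_radius A > 0" by (simp add: zero_ereal_def)
  have "eventually (\<lambda>z. z \<in> eball 0 (fps_conv_radius A)) (at 0)"
    using r by (intro eventually_at_in_open') (auto simp: zero_ereal_def)
  with S have "eventually (\<lambda>z. eval_fls (fps_to_fls A) z = g z) (at 0)"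
    by eventually_elim (auto simp: eval_fps_to_fls eval_fps_def sums_iff)
  with r show "g has_laurent_expansion fps_to_fls A"
    by (simp add: has_laurent_expansion_def)
qed

lemma expansion0_eqI:
  assumes "g has_laurent_expansion fps_to_fls A"
  shows "expansion0 g = fps_nth A"
proof -
  have "(\<exists>r>0. \<forall>z\<in>ball 0 r - {0}. (\<lambda>n. a n * z ^ n) sums g z) \<longleftrightarrow> a = fps_nth A" for a
  proof -
    have "(\<exists>r>0. \<forall>z\<in>ball 0 r - {0}. (\<lambda>n. a n * z ^ n) sums g z)
          \<longleftrightarrow> g has_laurent_expansion fps_to_fls (Abs_fps a)"
      by (simp add: has_laurent_expansion_fps_iff_sums eventually_at_0_iff_punctured_ball)
    also have "\<dots> \<longleftrightarrow> Abs_fps a = A"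
      using assms by (metis has_laurent_expansion_unique fps_to_fls_eq_iff)
    finally show ?thesis by (auto simp: fps_nth_inverse)
  qed
  thus ?thesis unfolding expansion0_def by simp
qed

lemma expansion0_of_fps_expansion:
  assumes "h has_fps_expansion A" and "eventually (\<lambda>z. g z = h z) (at 0)"
  shows "expansion0 g = fps_nth A"
proof (rule expansion0_eqI)
  show "g has_laurent_expansion fps_to_fls A"
    using has_laurent_expansion_fps[OF assms(1)] assms(2) by (metis has_laurent_expansion_cong)
qed

lemma punctured_sums_times_power_iff:
  fixes g :: "complex \<Rightarrow> complex"
  shows "(\<exists>a. \<exists>r>0. \<forall>z\<in>ball 0 r - {0}. (\<lambda>n. a n * z ^ (n + k)) sums g z)
         \<longleftrightarrow> (\<exists>A. (\<lambda>z. g z / z ^ k) has_laurent_expansion fps_to_fls A)"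
proof -
  have "(\<lambda>n. a n * z ^ (n + k)) sums g z \<longleftrightarrow> (\<lambda>n. a n * z ^ n) sums (g z / z ^ k)"
    if "z \<noteq> 0" for a z
  proof
    assume "(\<lambda>n. a n * z ^ (n + k)) sums g z"
    hence "(\<lambda>n. a n * z ^ (n + k) / z ^ k) sums (g z / z ^ k)" by (rule sums_divide)
    thus "(\<lambda>n. a n * z ^ n) sums (g z / z ^ k)" using that by (simp add: power_add)
  next
    assume "(\<lambda>n. a n * z ^ n) sums (g z / z ^ k)"
    hence "(\<lambda>n. a n * z ^ n * z ^ k) sums (g z / z ^ k * z ^ k)" by (rule sums_mult2)
    thus "(\<lambda>n. a n * z ^ (n + k)) sums g z" using that by (simp add: power_add mult.assoc)
  qed
  hence iff: "(\<exists>r>0. \<forall>z\<in>ball 0 r - {0}. (\<lambda>n. a n * z ^ (n + k)) sums g z)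
         \<longleftrightarrow> (\<lambda>z. g z / z ^ k) has_laurent_expansion fps_to_fls (Abs_fps a)" for a
    by (simp add: has_laurent_expansion_fps_iff_sums flip: eventually_at_0_iff_punctured_ball)
  show ?thesis
  proof
    assume "\<exists>A. (\<lambda>z. g z / z ^ k) has_laurent_expansion fps_to_fls A"
    then obtain A where "(\<lambda>z. g z / z ^ k) has_laurent_expansion fps_to_fls (Abs_fps (fps_nth A))"
      by (auto simp: fps_nth_inverse)
    thus "\<exists>a. \<exists>r>0. \<forall>z\<in>ball 0 r - {0}. (\<lambda>n. a n * z ^ (n + k)) sums g z"
      using iff by blast
  qed (use iff in blast)
qed

lemma has_fps_expansion_imp_sums_at_0:
  assumes "q has_fps_expansion Q"
  shows "eventually (\<lambda>z. (\<lambda>n. Q $ n * z ^ n) sums q z) (nhds 0)"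
proof -
  have "eventually (\<lambda>z. z \<in> eball 0 (fps_conv_radius Q)) (nhds 0)"
    using assms by (intro eventually_nhds_in_open) (auto simp: has_fps_expansion_def zero_ereal_def)
  moreover have "eventually (\<lambda>z. eval_fps Q z = q z) (nhds 0)"
    using assms by (simp add: has_fps_expansion_def)
  ultimately show ?thesis
    by eventually_elim (metis sums_eval_fps in_eball_iff dist_0_norm)
qed

lemma quotient_by_power_has_laurent_fps_iff:
  fixes q :: "complex \<Rightarrow> complex"
  assumes q: "q has_fps_expansion Q"
  shows "(\<exists>A. (\<lambda>z. q z / z ^ n) has_laurent_expansion fps_to_fls A) \<longleftrightarrow> (\<forall>i<n. Q $ i = 0)"
proof
  assume "\<exists>A. (\<lambda>z. q z / z ^ n) has_laurent_expansion fps_to_fls A"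
  then obtain A where A: "(\<lambda>z. q z / z ^ n) has_laurent_expansion fps_to_fls A" by blast
  have "(\<lambda>z. z ^ n * (q z / z ^ n)) has_laurent_expansion fls_X_intpow n * fps_to_fls A"
    by (intro laurent_expansion_intros A)
  moreover have "eventually (\<lambda>z. z ^ n * (q z / z ^ n) = q z) (at 0)"
    by (rule eventually_mono[OF eventually_neq_at_within[of 0 0 UNIV]]) simp
  ultimately have "q has_laurent_expansion fls_X_intpow n * fps_to_fls A"
    by (metis has_laurent_expansion_cong)
  with has_laurent_expansion_fps[OF q]
  have "fps_to_fls Q = fls_X_intpow n * fps_to_fls A"
    by (rule has_laurent_expansion_unique)
  hence "\<forall>i. fls_nth (fps_to_fls Q) (int i) = fls_nth (fls_X_intpow n * fps_to_fls A) (int i)"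
    by simp
  thus "\<forall>i<n. Q $ i = 0"
    by (simp add: fls_X_intpow_times_conv_shift)
next
  assume low: "\<forall>i<n. Q $ i = 0"
  have "eventually (\<lambda>z. (\<lambda>k. Q $ k * z ^ k) sums q z) (at 0)"
    using has_fps_expansion_imp_sums_at_0[OF q] by (simp add: eventually_at_filter eventually_mono)
  hence "eventually (\<lambda>z. (\<lambda>k. fps_shift n Q $ k * z ^ k) sums (q z / z ^ n)) (at 0)"
    using eventually_neq_at_within[of 0 0 UNIV]
  proof eventually_elim
    case (elim z)
    hence "(\<lambda>k. Q $ (k + n) * z ^ (k + n)) sums q z"
      using low by (subst sums_zero_iff_shift) auto
    hence "(\<lambda>k. Q $ (k + n) * z ^ (k + n) / z ^ n) sums (q z / z ^ n)"
      by (rule sums_divide)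
    thus ?case using elim by (simp add: power_add)
  qed
  thus "\<exists>A. (\<lambda>z. q z / z ^ n) has_laurent_expansion fps_to_fls A"
    by (auto simp: has_laurent_expansion_fps_iff_sums intro!: exI[of _ "fps_shift n Q"])
qed

lemma fps_mult_vanishing:
  fixes R S :: "'a::comm_semiring_0 fps"
  assumes "\<forall>i\<le>n. R $ i = 0"
  shows "\<forall>i\<le>n. (R * S) $ i = 0"
  using assms by (auto simp: fps_mult_nth intro!: sum.neutral)

lemma fps_mult_nth_after_vanishing:
  fixes R S :: "'a::comm_semiring_0 fps"
  assumes "\<forall>i<n. R $ i = 0"
  shows "(R * S) $ n = R $ n * S $ 0"
proof -
  have "(R * S) $ n = (\<Sum>i\<in>{n}. R $ i * S $ (n - i))"
    unfolding fps_mult_nth using assms by (intro sum.mono_neutral_right) auto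
  thus ?thesis by simp
qed

lemma fps_geometric_coefficient:
  fixes A G :: "'a::field fps"
  assumes G0: "G $ 0 = 0"
  shows "(A * inverse (1 - fps_const c * G)) $ p = (\<Sum>k\<le>p. c ^ k * (A * G ^ k) $ p)"
proof -
  define H where "H = fps_const c * G"
  have H: "H = fps_X * fps_shift 1 H"
    by (intro fps_ext) (simp add: H_def G0)
  have inv: "inverse (1 - H) = (\<Sum>k\<le>p. H ^ k) + H ^ Suc p * inverse (1 - H)"
  proof -
    have unit: "(1 - H) * inverse (1 - H) = 1"
      using G0 by (intro inverse_mult_eq_1') (simp add: H_def)
    have "(1 - H) * (\<Sum>k\<le>p. H ^ k) = 1 - H ^ Suc p"
      using one_diff_power_eq[of H "Suc p"] by (simp add: lessThan_Suc_atMost)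
    hence "(1 - H) * ((\<Sum>k\<le>p. H ^ k) + H ^ Suc p * inverse (1 - H)) = 1"
      using unit by (simp add: distrib_left mult.left_commute)
    thus ?thesis by (intro fps_inverse_unique) (simp add: mult.commute)
  qed
  have "(A * (H ^ Suc p * inverse (1 - H))) $ p = 0"
  proof -
    have "H ^ Suc p = (fps_X * fps_shift 1 H) ^ Suc p"
      using H by (rule arg_cong)
    hence "A * (H ^ Suc p * inverse (1 - H))
          = fps_X ^ Suc p * (A * fps_shift 1 H ^ Suc p * inverse (1 - H))"
      by (simp only: power_mult_distrib ac_simps)
    thus ?thesis by (simp only: fps_X_power_mult_nth) simp
  qed
  hence "(A * inverse (1 - H)) $ p = (\<Sum>k\<le>p. (A * H ^ k) $ p)"
    by (subst inv) (simp add: algebra_simps sum_distrib_left fps_sum_nth)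
  moreover have "(A * H ^ k) $ p = c ^ k * (A * G ^ k) $ p" for k
  proof -
    have "A * H ^ k = fps_const (c ^ k) * (A * G ^ k)"
      by (simp add: H_def power_mult_distrib fps_const_power)
    thus ?thesis by (metis fps_mult_left_const_nth)
  qed
  ultimately show ?thesis unfolding H_def by simp
qed

text \<open>Formal calculus for a series  U  with  U(0) = 1.  F = X U  plays the role of f,
  D = F'  of f', and  V = 1/U  of  z/f(z).\<close>
locale normalized_fps =
  fixes U :: "'a::field_char_0 fps"
  assumes U0: "U $ 0 = 1"
begin

definition F :: "'a fps" where "F = fps_X * U"
definition D :: "'a fps" where "D = fps_deriv F"
definition V :: "'a fps" where "V = inverse U"

lemma V_mult_U: "V * U = 1"
  unfolding V_def using U0 by (intro inverse_mult_eq_1) simp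

lemma V0: "V $ 0 = 1" and D0: "D $ 0 = 1" and F0: "F $ 0 = 0"
  using U0 by (simp_all add: V_def D_def F_def)

lemma D_eq: "D = U + fps_X * fps_deriv U"
  by (simp add: D_def F_def fps_deriv_mult)

lemma U_power_mult_V_power:
  "i \<le> q \<Longrightarrow> U ^ i * V ^ q = V ^ (q - i)"
  "q \<le> i \<Longrightarrow> U ^ i * V ^ q = U ^ (i - q)"
proof -
  assume "i \<le> q"
  hence "U ^ i * V ^ q = (V * U) ^ i * V ^ (q - i)"
    by (simp add: power_mult_distrib power_add[symmetric] algebra_simps)
  thus "U ^ i * V ^ q = V ^ (q - i)" using V_mult_U by simp
next
  assume "q \<le> i"
  hence "U ^ i * V ^ q = (V * U) ^ q * U ^ (i - q)"
    by (simp add: power_mult_distrib power_add[symmetric] algebra_simps)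
  thus "U ^ i * V ^ q = U ^ (i - q)" using V_mult_U by simp
qed

text \<open>The formal residue of  F'/F^(s+1),  s >= 1, vanishes: it is the residue of the
  derivative  -(F^(-s))'/s.  In terms of U this reads as follows.\<close>
lemma residue_of_negative_power_derivative:
  assumes s: "s \<ge> 1"
  shows "(D * V ^ (s + 1)) $ s = 0"
proof -
  have dV: "fps_deriv V = - fps_deriv U * V\<^sup>2"
    unfolding V_def using U0 by (intro fps_inverse_deriv) simp
  have Vs: "V ^ s = U * V ^ (s + 1)"
    using V_mult_U by (simp add: algebra_simps)
  have dVs: "fps_deriv (V ^ s) = fps_const (of_nat s) * fps_deriv V * V ^ (s - 1)"
    by (rule fps_deriv_power)
  have V2: "V\<^sup>2 * V ^ (s - 1) = V ^ (s + 1)"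
    using s by (simp add: power_add[symmetric])
  have "fps_X * fps_deriv (V ^ s) = - fps_const (of_nat s) * (fps_X * fps_deriv U) * (V\<^sup>2 * V ^ (s - 1))"
    unfolding dVs dV by (simp add: algebra_simps flip: fps_const_neg)
  also have "\<dots> = - fps_const (of_nat s) * ((D - U) * V ^ (s + 1))"
    unfolding V2 D_eq by (simp add: algebra_simps)
  finally have XdVs: "fps_X * fps_deriv (V ^ s) = - fps_const (of_nat s) * ((D - U) * V ^ (s + 1))" .
  have "fps_X * fps_deriv (V ^ s) - fps_const (of_nat s) * V ^ s
        = - fps_const (of_nat s) * ((D - U) * V ^ (s + 1)) - fps_const (of_nat s) * (U * V ^ (s + 1))"
    unfolding XdVs by (simp only: Vs)
  hence "fps_X * fps_deriv (V ^ s) - fps_const (of_nat s) * V ^ s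
         = - fps_const (of_nat s) * (D * V ^ (s + 1))"
    by (simp add: algebra_simps flip: fps_const_neg)
  moreover have "(fps_X * fps_deriv (V ^ s) - fps_const (of_nat s) * V ^ s) $ s = 0"
    using s by simp
  ultimately show ?thesis using s by simp
qed

lemma residue_orthogonality:
  "(F ^ i * D * V ^ (q + 1)) $ q = (if i = q then 1 else 0)"
proof (cases "i \<le> q")
  case False
  have "F ^ i * D * V ^ (q + 1) = fps_X ^ i * (U ^ i * D * V ^ (q + 1))"
    by (simp add: F_def power_mult_distrib algebra_simps)
  thus ?thesis using False by (simp only: fps_X_power_mult_nth) simp
next
  case True
  have "F ^ i * D * V ^ (q + 1) = fps_X ^ i * (D * (U ^ i * V ^ (q + 1)))"
    by (simp add: F_def power_mult_distrib algebra_simps)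
  also have "U ^ i * V ^ (q + 1) = V ^ (q - i + 1)"
    using True by (simp add: U_power_mult_V_power Suc_diff_le)
  finally have "(F ^ i * D * V ^ (q + 1)) $ q = (D * V ^ (q - i + 1)) $ (q - i)"
    using True by (simp only: fps_X_power_mult_nth) simp
  also have "\<dots> = (if i = q then 1 else 0)"
    using residue_of_negative_power_derivative[of "q - i"] True D0 V0 by auto
  finally show ?thesis .
qed

text \<open>A series all of whose residue pairings  [X^q] (R F' U^(-(q+1))),  q <= n, vanish
  is itself  O(X^(n+1)); the pairings are triangular with unit diagonal.\<close>
lemma vanishing_by_residues:
  assumes "\<forall>q\<le>n. (R * D * V ^ (q + 1)) $ q = 0"
  shows "\<forall>i\<le>n. R $ i = 0"
proof -
  have "\<forall>i<m. R $ i = 0" if "m \<le> Suc n" for m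
    using that
  proof (induction m)
    case 0
    show ?case by simp
  next
    case (Suc m)
    hence IH: "\<forall>i<m. R $ i = 0" and m: "m \<le> n" by auto
    have "R $ m = (R * (D * V ^ (m + 1))) $ m"
      using fps_mult_nth_after_vanishing[OF IH] D0 V0 by (simp add: fps_power_zeroth)
    also have "\<dots> = 0"
      using assms m by (simp add: mult.assoc)
    finally show ?case using IH less_Suc_eq by auto
  qed
  thus ?thesis by auto
qed

lemma residue_pairing:
  assumes "q \<le> n"
  shows "((\<Sum>m\<le>n. fps_const (\<beta> m) * F ^ m) * D * V ^ (q + 1)) $ q = \<beta> q"
proof -
  have "((\<Sum>m\<le>n. fps_const (\<beta> m) * F ^ m) * D * V ^ (q + 1)) $ q
        = (\<Sum>m\<le>n. \<beta> m * (F ^ m * D * V ^ (q + 1)) $ q)"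
    by (simp add: sum_distrib_right fps_sum_nth mult.assoc)
  also have "\<dots> = (\<Sum>m\<le>n. if m = q then \<beta> m else 0)"
    by (intro sum.cong refl) (simp only: residue_orthogonality, simp)
  finally show ?thesis using assms by simp
qed

lemma F_power_expansion_iff:
  "(\<forall>i\<le>n. (Y - (\<Sum>m\<le>n. fps_const (\<beta> m) * F ^ m)) $ i = 0)
   \<longleftrightarrow> (\<forall>m\<le>n. \<beta> m = (Y * D * V ^ (m + 1)) $ m)"
proof -
  define S where "S = (\<Sum>m\<le>n. fps_const (\<beta> m) * F ^ m)"
  have pairing: "((Y - S) * D * V ^ (q + 1)) $ q = (Y * D * V ^ (q + 1)) $ q - \<beta> q"
    if "q \<le> n" for q
    using residue_pairing[OF that, of \<beta>] by (simp add: S_def algebra_simps)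
  show ?thesis
    unfolding S_def[symmetric]
  proof
    assume "\<forall>i\<le>n. (Y - S) $ i = 0"
    hence "\<forall>i\<le>n. ((Y - S) * (D * V ^ (q + 1))) $ i = 0" for q
      by (rule fps_mult_vanishing)
    thus "\<forall>m\<le>n. \<beta> m = (Y * D * V ^ (m + 1)) $ m"
      using pairing by (auto simp: mult.assoc)
  next
    assume "\<forall>m\<le>n. \<beta> m = (Y * D * V ^ (m + 1)) $ m"
    thus "\<forall>i\<le>n. (Y - S) $ i = 0"
      using pairing by (intro vanishing_by_residues) simp
  qed
qed

text \<open>B p k = [X^p] (X F'/F)^2 F^k.  These numbers are the coefficients of  Lambda_p.\<close>
definition B :: "nat \<Rightarrow> nat \<Rightarrow> 'a" where
  "B p k = (D * D * V * V * F ^ k) $ p"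

lemma B_diagonal: "B p p = 1"
proof -
  have "D * D * V * V * F ^ p = fps_X ^ p * (D * D * V * V * U ^ p)"
    by (simp add: F_def power_mult_distrib algebra_simps)
  thus ?thesis using D0 V0 U0 unfolding B_def
    by (simp only: fps_X_power_mult_nth) (simp add: fps_power_zeroth)
qed

lemma B_as_residue_pairing:
  assumes "k \<le> p"
  shows "B p k = (D * V * U ^ p * D * V ^ (p - k + 1)) $ (p - k)"
proof -
  have "D * V * U ^ p * D * V ^ (p - k + 1) = D * D * V * V * (U ^ p * V ^ (p - k))"
    by (simp add: algebra_simps)
  also have "U ^ p * V ^ (p - k) = U ^ k"
    using assms by (simp add: U_power_mult_V_power)
  finally have pairing: "D * V * U ^ p * D * V ^ (p - k + 1) = D * D * V * V * U ^ k" .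
  have "D * D * V * V * F ^ k = fps_X ^ k * (D * D * V * V * U ^ k)"
    by (simp add: F_def power_mult_distrib algebra_simps)
  hence "B p k = (D * D * V * V * U ^ k) $ (p - k)"
    unfolding B_def using assms by (simp only: fps_X_power_mult_nth) simp
  thus ?thesis unfolding pairing .
qed

text \<open>If  Lambda(u) = sum_{k<=p} a_k u^(1-k),  then  z^(1-p) f'(z) + Lambda(f(z))  equals
  z^(1-p)  times the following power series (U being the series of f(z)/z).\<close>
definition lambda_series :: "nat \<Rightarrow> (nat \<Rightarrow> 'a) \<Rightarrow> 'a fps" where
  "lambda_series p a = D + (\<Sum>k\<le>p. fps_const (a k) * fps_X ^ (p - k) * U * V ^ k)"

lemma lambda_series_times_unit:
  "lambda_series p a * (V * U ^ p) = D * V * U ^ p - (\<Sum>m\<le>p. fps_const (- a (p - m)) * F ^ m)"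
proof -
  have "(\<Sum>k\<le>p. fps_const (a k) * fps_X ^ (p - k) * U * V ^ k) * (V * U ^ p)
        = (\<Sum>k\<le>p. fps_const (a k) * F ^ (p - k))"
    unfolding sum_distrib_right
  proof (intro sum.cong refl)
    fix k assume "k \<in> {..p}"
    hence "U ^ p * V ^ k = U ^ (p - k)" by (simp add: U_power_mult_V_power)
    hence "fps_const (a k) * fps_X ^ (p - k) * U * V ^ k * (V * U ^ p)
           = fps_const (a k) * fps_X ^ (p - k) * U ^ (p - k) * (V * U)"
      by (simp add: algebra_simps)
    thus "fps_const (a k) * fps_X ^ (p - k) * U * V ^ k * (V * U ^ p) = fps_const (a k) * F ^ (p - k)"
      by (simp add: V_mult_U F_def power_mult_distrib)
  qed
  also have "\<dots> = (\<Sum>m\<le>p. fps_const (a (p - m)) * F ^ m)"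
    by (rule sum.reindex_bij_witness[of _ "\<lambda>m. p - m" "\<lambda>k. p - k"]) auto
  finally show ?thesis
    by (simp add: lambda_series_def algebra_simps sum_negf flip: fps_const_neg)
qed

lemma lambda_series_vanishing_iff:
  "(\<forall>i\<le>p. lambda_series p a $ i = 0) \<longleftrightarrow> (\<forall>k\<le>p. a k = - B p k)"
proof -
  have unit: "V * U ^ p * (U * V ^ p) = 1"
    using V_mult_U by (simp add: algebra_simps flip: power_mult_distrib)
  have "(\<forall>i\<le>p. lambda_series p a $ i = 0)
        \<longleftrightarrow> (\<forall>i\<le>p. (lambda_series p a * (V * U ^ p)) $ i = 0)"
  proof
    assume "\<forall>i\<le>p. (lambda_series p a * (V * U ^ p)) $ i = 0"
    hence "\<forall>i\<le>p. (lambda_series p a * (V * U ^ p) * (U * V ^ p)) $ i = 0"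
      by (rule fps_mult_vanishing)
    moreover have "lambda_series p a * (V * U ^ p) * (U * V ^ p) = lambda_series p a"
      by (simp only: mult.assoc[of "lambda_series p a"] unit mult_1_right)
    ultimately show "\<forall>i\<le>p. lambda_series p a $ i = 0" by simp
  qed (rule fps_mult_vanishing)
  also have "\<dots> \<longleftrightarrow> (\<forall>m\<le>p. - a (p - m) = (D * V * U ^ p * D * V ^ (m + 1)) $ m)"
    unfolding lambda_series_times_unit by (rule F_power_expansion_iff)
  also have "\<dots> \<longleftrightarrow> (\<forall>m\<le>p. - a (p - m) = B p (p - m))"
    by (intro all_cong) (simp add: B_as_residue_pairing)
  also have "\<dots> \<longleftrightarrow> (\<forall>k\<le>p. a k = - B p k)"
    by (metis diff_diff_cancel diff_le_self minus_equation_iff)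
  finally show ?thesis .
qed

definition W :: "'a \<Rightarrow> 'a fps" where
  "W w = inverse (1 - fps_const w * F)"

lemma B_generating_series: "(D * D * V * V * W w) $ p = (\<Sum>k\<le>p. w ^ k * B p k)"
  unfolding W_def B_def using F0 by (rule fps_geometric_coefficient)

lemma X_times_T_series:
  assumes "w \<noteq> 0"
  shows "fps_X * (D * D * V * W w) = fps_const (1 / w) * (D * D * V * V * W w - D * D * V * V)"
proof -
  have "(1 - fps_const w * F) * W w = 1"
    unfolding W_def using F0 by (intro inverse_mult_eq_1') simp
  hence "fps_const w * (F * W w) = W w - 1"
    by (simp add: algebra_simps)
  moreover have "F * W w = fps_const (1 / w) * (fps_const w * (F * W w))"
    using assms by (simp add: mult.assoc[symmetric] flip: fps_const_mult)
  ultimately have FW: "F * W w = fps_const (1 / w) * (W w - 1)"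
    by simp
  have "fps_X * (D * D * V * W w) = D * D * V * V * (F * W w)"
    using V_mult_U by (simp add: F_def algebra_simps)
  thus ?thesis unfolding FW by (simp add: algebra_simps)
qed

end

lemma Lambda_form_as_sum:
  "Lambda_form p \<alpha> x = (\<Sum>k\<le>p. (if k = p then -1 else \<alpha> k) * x powi (1 - int k))"
  by (simp add: Lambda_form_def lessThan_Suc_atMost[symmetric])

lemma powi_one_minus: "(x::complex) \<noteq> 0 \<Longrightarrow> x powi (1 - int k) = x * (1 / x) ^ k"
  by (simp add: power_int_diff power_divide divide_inverse power_inverse)

locale normalized_map =
  fixes f :: "complex \<Rightarrow> complex" and c :: "nat \<Rightarrow> complex"
  assumes ser: "\<forall>z\<in>ball 0 1. (\<lambda>n. (if n = 0 then 1 else c n) * z ^ Suc n) sums f z"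
begin

definition Uf :: "complex fps" where
  "Uf = Abs_fps (\<lambda>n. if n = 0 then 1 else c n)"

sublocale normalized_fps Uf
  by unfold_locales (simp add: Uf_def)

definition uf :: "complex \<Rightarrow> complex" where
  "uf z = (if z = 0 then 1 else f z / z)"

lemma f_0: "f 0 = 0"
proof -
  have "(\<lambda>n. (if n = 0 then 1 else c n) * 0 ^ Suc n) sums f 0"
    by (rule bspec[OF ser]) simp
  thus ?thesis by (simp add: sums_iff)
qed

lemma f_eq: "f z = z * uf z"
  using f_0 by (simp add: uf_def)

lemma F_nth_Suc: "F $ Suc n = (if n = 0 then 1 else c n)"
  unfolding F_def by (simp add: Uf_def)

lemma f_expansion: "f has_fps_expansion F"
proof (rule has_fps_expansionI)
  have "eventually (\<lambda>z. z \<in> ball 0 1) (nhds (0::complex))"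
    by (intro eventually_nhds_in_open) auto
  thus "eventually (\<lambda>z. (\<lambda>n. F $ n * z ^ n) sums f z) (nhds 0)"
  proof eventually_elim
    case (elim z)
    hence "(\<lambda>n. F $ (n + 1) * z ^ (n + 1)) sums f z"
      using ser by (simp add: F_nth_Suc)
    thus ?case by (subst (asm) sums_zero_iff_shift) (auto simp: F0)
  qed
qed

lemma uf_expansion: "uf has_fps_expansion Uf"
proof -
  have "(\<lambda>z. if z = 0 then F $ 1 else f z / z ^ 1) has_fps_expansion fps_shift 1 F"
    using U0 by (intro has_fps_expansion_shift f_expansion subdegree_geI) (auto simp: F_def)
  moreover have "(\<lambda>z. if z = 0 then F $ 1 else f z / z ^ 1) = uf"
    using U0 by (auto simp: uf_def F_def)
  moreover have "fps_shift 1 F = Uf"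
    unfolding F_def by (metis fps_shift_times_fps_X' mult.commute)
  ultimately show ?thesis by simp
qed

lemma deriv_f_expansion: "deriv f has_fps_expansion D"
  unfolding D_def by (intro has_fps_expansion_deriv f_expansion)

lemma inverse_uf_expansion: "(\<lambda>z. inverse (uf z)) has_fps_expansion V"
  unfolding V_def using U0 by (intro has_fps_expansion_inverse uf_expansion) simp

lemma W_expansion: "(\<lambda>z. inverse (1 - w * f z)) has_fps_expansion W w"
  unfolding W_def using F0
  by (intro has_fps_expansion_inverse fps_expansion_intros f_expansion) auto

lemma eventually_uf_nonzero: "eventually (\<lambda>z. z \<noteq> 0 \<and> uf z \<noteq> 0) (at 0)"
proof -
  have "isCont uf 0" by (rule has_fps_expansion_imp_continuous[OF uf_expansion])
  hence "(uf \<longlongrightarrow> uf 0) (nhds 0)"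
    by (simp add: isCont_def tendsto_nhds_iff)
  hence "eventually (\<lambda>z. uf z \<noteq> 0) (nhds 0)"
    by (rule tendsto_imp_eventually_ne) (simp add: uf_def)
  thus ?thesis
    unfolding eventually_at_filter by eventually_elim auto
qed

lemma Fpoly_eq: "Fpoly f n w = (D * V * W w) $ n"
  unfolding Fpoly_def
proof (rule fun_cong[OF expansion0_of_fps_expansion])
  show "(\<lambda>z. deriv f z * inverse (uf z) * inverse (1 - w * f z)) has_fps_expansion D * V * W w"
    by (intro has_fps_expansion_mult deriv_f_expansion inverse_uf_expansion W_expansion)
  show "eventually (\<lambda>z. z * deriv f z / (f z - w * (f z)\<^sup>2)
          = deriv f z * inverse (uf z) * inverse (1 - w * f z)) (at 0)"
    using eventually_neq_at_within[of 0 0 UNIV]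
  proof eventually_elim
    case (elim z)
    have "f z - w * (f z)\<^sup>2 = z * (uf z * (1 - w * f z))"
      by (simp add: power2_eq_square algebra_simps flip: f_eq)
    thus ?case using elim by (simp add: divide_inverse inverse_mult_distrib)
  qed
qed

lemma Tpoly_eq: "Tpoly f n w = (D * D * V * W w) $ n"
  unfolding Tpoly_def
proof (rule fun_cong[OF expansion0_of_fps_expansion])
  show "(\<lambda>z. deriv f z * deriv f z * inverse (uf z) * inverse (1 - w * f z))
          has_fps_expansion D * D * V * W w"
    by (intro has_fps_expansion_mult deriv_f_expansion inverse_uf_expansion W_expansion)
  show "eventually (\<lambda>z. z * (deriv f z)\<^sup>2 / (f z - w * (f z)\<^sup>2)
          = deriv f z * deriv f z * inverse (uf z) * inverse (1 - w * f z)) (at 0)"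
    using eventually_neq_at_within[of 0 0 UNIV]
  proof eventually_elim
    case (elim z)
    have "f z - w * (f z)\<^sup>2 = z * (uf z * (1 - w * f z))"
      by (simp add: power2_eq_square algebra_simps flip: f_eq)
    thus ?case using elim by (simp add: divide_inverse inverse_mult_distrib power2_eq_square)
  qed
qed

lemma acoef_eq: "acoef f p = (D * D * V * V) $ p"
  unfolding acoef_def
proof (rule fun_cong[OF expansion0_of_fps_expansion])
  show "(\<lambda>z. deriv f z * deriv f z * inverse (uf z) * inverse (uf z)) has_fps_expansion D * D * V * V"
    by (intro has_fps_expansion_mult deriv_f_expansion inverse_uf_expansion)
  show "eventually (\<lambda>z. z\<^sup>2 * (deriv f z)\<^sup>2 / (f z)\<^sup>2
          = deriv f z * deriv f z * inverse (uf z) * inverse (uf z)) (at 0)"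
    using eventually_neq_at_within[of 0 0 UNIV]
  proof eventually_elim
    case (elim z)
    hence "z * (z * (inverse z * inverse z)) = 1" by (simp add: field_simps)
    thus ?case by (simp add: f_eq divide_inverse inverse_mult_distrib power2_eq_square)
  qed
qed

lemma D_nth: "D $ k = of_nat (k + 1) * (if k = 0 then 1 else c k)"
  unfolding D_def fps_deriv_nth by (simp add: F_nth_Suc)

definition lambda_fun :: "nat \<Rightarrow> (nat \<Rightarrow> complex) \<Rightarrow> complex \<Rightarrow> complex" where
  "lambda_fun p a z = deriv f z + (\<Sum>k\<le>p. a k * z ^ (p - k) * uf z * inverse (uf z) ^ k)"

lemma lambda_fun_expansion: "lambda_fun p a has_fps_expansion lambda_series p a"
  unfolding lambda_fun_def lambda_series_def
  by (intro has_fps_expansion_add has_fps_expansion_sum has_fps_expansion_mult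
            has_fps_expansion_const has_fps_expansion_fps_X_power has_fps_expansion_power
            deriv_f_expansion uf_expansion inverse_uf_expansion)

lemma Lambda_cond_expression:
  assumes z: "z \<noteq> 0" and u: "uf z \<noteq> 0"
  shows "(z powi (1 - int p) * deriv f z + Lambda_form p \<alpha> (f z)) / z\<^sup>2
         = lambda_fun p (\<lambda>k. if k = p then -1 else \<alpha> k) z / z ^ (p + 1)"
proof -
  have summand: "(z * uf z) powi (1 - int k) / z\<^sup>2
              = z ^ (p - k) * uf z * inverse (uf z) ^ k / z ^ (p + 1)" if "k \<le> p" for k
  proof -
    have "z ^ (p + 1) = z ^ (p - k) * z ^ k * z"
      using that by (simp flip: power_add)
    thus ?thesis using z u
      by (simp add: powi_one_minus power_mult_distrib power_divide divide_simps power2_eq_square)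
  qed
  define a where "a = (\<lambda>k. if k = p then -1 else \<alpha> k)"
  have lead: "z powi (1 - int p) / z\<^sup>2 = 1 / z ^ (p + 1)"
    using z by (simp add: powi_one_minus power_divide divide_simps power2_eq_square)
  have sums: "(\<Sum>k\<le>p. a k * (z * uf z) powi (1 - int k)) / z\<^sup>2
              = (\<Sum>k\<le>p. a k * z ^ (p - k) * uf z * inverse (uf z) ^ k) / z ^ (p + 1)"
    unfolding sum_divide_distrib
  proof (intro sum.cong refl)
    fix k assume "k \<in> {..p}"
    thus "a k * (z * uf z) powi (1 - int k) / z\<^sup>2
          = a k * z ^ (p - k) * uf z * inverse (uf z) ^ k / z ^ (p + 1)"
      using summand[of k] by (simp add: mult.assoc flip: times_divide_eq_right)
  qed
  have "(z powi (1 - int p) * deriv f z + Lambda_form p \<alpha> (f z)) / z\<^sup>2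
        = z powi (1 - int p) / z\<^sup>2 * deriv f z
          + (\<Sum>k\<le>p. a k * (z * uf z) powi (1 - int k)) / z\<^sup>2"
    unfolding Lambda_form_as_sum a_def f_eq[of z] by (simp add: add_divide_distrib)
  also have "\<dots> = lambda_fun p a z / z ^ (p + 1)"
    unfolding lead sums lambda_fun_def by (simp add: add_divide_distrib)
  finally show ?thesis unfolding a_def .
qed

lemma Lambda_cond_iff: "Lambda_cond f p (Lambda_form p \<alpha>) \<longleftrightarrow> (\<forall>j<p. \<alpha> j = - B p j)"
proof -
  define a where "a = (\<lambda>k. if k = p then -1 else \<alpha> k)"
  have "Lambda_cond f p (Lambda_form p \<alpha>)
        \<longleftrightarrow> (\<exists>A. (\<lambda>z. (z powi (1 - int p) * deriv f z + Lambda_form p \<alpha> (f z)) / z\<^sup>2)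
                  has_laurent_expansion fps_to_fls A)"
    unfolding Lambda_cond_def by (rule punctured_sums_times_power_iff)
  also have "\<dots> \<longleftrightarrow> (\<exists>A. (\<lambda>z. lambda_fun p a z / z ^ (p + 1)) has_laurent_expansion fps_to_fls A)"
  proof (intro ex_cong1 has_laurent_expansion_cong refl)
    show "eventually (\<lambda>z. (z powi (1 - int p) * deriv f z + Lambda_form p \<alpha> (f z)) / z\<^sup>2
                           = lambda_fun p a z / z ^ (p + 1)) (at 0)"
      using eventually_uf_nonzero by eventually_elim (simp add: a_def Lambda_cond_expression)
  qed
  also have "\<dots> \<longleftrightarrow> (\<forall>i<p + 1. lambda_series p a $ i = 0)"
    by (rule quotient_by_power_has_laurent_fps_iff[OF lambda_fun_expansion])
  also have "\<dots> \<longleftrightarrow> (\<forall>k\<le>p. a k = - B p k)"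
    unfolding lambda_series_vanishing_iff[symmetric] by auto
  also have "\<dots> \<longleftrightarrow> (\<forall>j<p. \<alpha> j = - B p j)"
    using B_diagonal by (auto simp: a_def le_less)
  finally show ?thesis .
qed

lemma Lambda_eq: "Lambda f p = Lambda_form p (\<lambda>j. - B p j)"
  unfolding Lambda_def
proof (rule the_equality)
  fix L assume "(\<exists>\<alpha>. L = Lambda_form p \<alpha>) \<and> Lambda_cond f p L"
  then obtain \<alpha> where "L = Lambda_form p \<alpha>" and "\<forall>j<p. \<alpha> j = - B p j"
    using Lambda_cond_iff by blast
  thus "L = Lambda_form p (\<lambda>j. - B p j)"
    by (simp add: Lambda_form_def fun_eq_iff)
qed (use Lambda_cond_iff in blast)

lemma Lambda_value:
  assumes u: "u \<noteq> 0"
  shows "Lambda f p u = - u * (D * D * V * V * W (1 / u)) $ p"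
proof -
  have "Lambda f p u = (\<Sum>k\<le>p. - B p k * (u * (1 / u) ^ k))"
    unfolding Lambda_eq Lambda_form_as_sum using u B_diagonal
    by (intro sum.cong refl) (simp add: powi_one_minus)
  also have "\<dots> = - u * (\<Sum>k\<le>p. (1 / u) ^ k * B p k)"
    by (simp add: sum_distrib_left sum_negf mult_ac)
  finally show ?thesis by (simp add: B_generating_series)
qed

text \<open>Part (1): T = F' * (series of F_n), read off coefficientwise.\<close>
lemma Tpoly_convolution:
  assumes p: "p \<ge> 1"
  shows "Tpoly f (p - 1) w = (\<Sum>k<p. of_nat (k + 1) * (if k = 0 then 1 else c k) * Fpoly f (p - 1 - k) w)"
proof -
  have "Tpoly f (p - 1) w = (D * (D * V * W w)) $ (p - 1)"
    unfolding Tpoly_eq by (simp add: mult.assoc)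
  also have "\<dots> = (\<Sum>k=0..p-1. D $ k * (D * V * W w) $ (p - 1 - k))"
    by (rule fps_mult_nth)
  also have "{0..p-1} = {..<p}"
    using p by auto
  finally show ?thesis
    by (simp add: D_nth Fpoly_eq)
qed

text \<open>Part (2):  T_(p-1)(1/u) = u [X^p] D^2 V^2 W_(1/u) - u a_p^p,  and the first term
  is  -Lambda_p(u).\<close>
lemma Lambda_plus_acoef:
  assumes u: "u \<noteq> 0" and p: "p \<ge> 1"
  shows "Lambda f p u + acoef f p * u = - Tpoly f (p - 1) (1 / u)"
proof -
  have "Tpoly f (p - 1) (1 / u) = (fps_X * (D * D * V * W (1 / u))) $ p"
    using p by (simp add: Tpoly_eq)
  also have "fps_X * (D * D * V * W (1 / u)) = fps_const u * (D * D * V * V * W (1 / u) - D * D * V * V)"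
    using X_times_T_series[of "1 / u"] u by simp
  also have "(fps_const u * (D * D * V * V * W (1 / u) - D * D * V * V)) $ p
             = u * (D * D * V * V * W (1 / u)) $ p - u * (D * D * V * V) $ p"
    by (simp add: algebra_simps)
  finally have "Tpoly f (p - 1) (1 / u) = u * (D * D * V * V * W (1 / u)) $ p - u * (D * D * V * V) $ p" .
  thus ?thesis
    unfolding Lambda_value[OF u] acoef_eq by (simp add: algebra_simps)
qed

lemma Lambda_generating_function:
  assumes u: "u \<noteq> 0"
  shows "\<exists>r>0. \<forall>\<xi>\<in>ball 0 r - {0}. (\<lambda>p. Lambda f p u * \<xi> ^ p) sums
           (\<xi>\<^sup>2 * (deriv f \<xi>)\<^sup>2 / (f \<xi>)\<^sup>2 * (u\<^sup>2 / (f \<xi> - u)))"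
proof -
  define G where "G = D * D * V * V * (fps_const (- u) * W (1 / u))"
  have "G = fps_const (- u) * (D * D * V * V * W (1 / u))"
    by (simp add: G_def algebra_simps)
  hence coeff: "G $ p = Lambda f p u" for p
    unfolding Lambda_value[OF u] by simp
  have exp: "(\<lambda>z. deriv f z * deriv f z * inverse (uf z) * inverse (uf z) * (- u * inverse (1 - 1 / u * f z)))
          has_fps_expansion G"
    unfolding G_def
    by (intro has_fps_expansion_mult has_fps_expansion_cmult_left deriv_f_expansion
              inverse_uf_expansion W_expansion)
  have ev: "eventually (\<lambda>z. z\<^sup>2 * (deriv f z)\<^sup>2 / (f z)\<^sup>2 * (u\<^sup>2 / (f z - u))
      = deriv f z * deriv f z * inverse (uf z) * inverse (uf z) * (- u * inverse (1 - 1 / u * f z))) (at 0)"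
    using eventually_neq_at_within[of 0 0 UNIV]
  proof eventually_elim
    case (elim z)
    have "z * (z * (inverse z * inverse z)) = 1" using elim by (simp add: field_simps)
    hence first: "z\<^sup>2 * (deriv f z)\<^sup>2 / (f z)\<^sup>2 = deriv f z * deriv f z * inverse (uf z) * inverse (uf z)"
      by (simp add: f_eq divide_inverse inverse_mult_distrib power2_eq_square)
    have second: "u\<^sup>2 / (f z - u) = - u * inverse (1 - 1 / u * f z)"
    proof -
      have "f z - u = - u * (1 - 1 / u * f z)"
        using u by (simp add: algebra_simps)
      thus ?thesis using u by (simp add: divide_inverse inverse_mult_distrib power2_eq_square)
    qed
    show ?case unfolding first second ..
  qed
  have "(\<lambda>z. z\<^sup>2 * (deriv f z)\<^sup>2 / (f z)\<^sup>2 * (u\<^sup>2 / (f z - u)))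
                     has_laurent_expansion fps_to_fls G"
    using has_laurent_expansion_cong[OF ev refl] has_laurent_expansion_fps[OF exp] by simp
  thus ?thesis
    by (simp add: has_laurent_expansion_fps_iff_sums eventually_at_0_iff_punctured_ball coeff)
qed

end

theorem theorem2p1:
  fixes f :: "complex \<Rightarrow> complex" and c :: "nat \<Rightarrow> complex"
  assumes holo: "f holomorphic_on ball 0 1"
    and univ: "inj_on f (ball 0 1)"
    and ser: "\<forall>z\<in>ball 0 1. (\<lambda>n. (if n = 0 then 1 else c n) * z ^ Suc n) sums f z"
  shows "(\<forall>p\<ge>1. \<forall>w. Tpoly f (p - 1) w =
            (\<Sum>k<p. of_nat (k + 1) * (if k = 0 then 1 else c k) * Fpoly f (p - 1 - k) w))
       \<and> (\<forall>p\<ge>1. \<forall>u. u \<noteq> 0 \<longrightarrow> Lambda f p u + acoef f p * u = - Tpoly f (p - 1) (1 / u))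
       \<and> (\<forall>u. u \<noteq> 0 \<longrightarrow> (\<exists>r>0. \<forall>\<xi>\<in>ball 0 r - {0}.
            (\<lambda>p. Lambda f p u * \<xi> ^ p) sums
              (\<xi>^2 * (deriv f \<xi>)^2 / (f \<xi>)^2 * (u^2 / (f \<xi> - u)))))"
proof -
  interpret normalized_map f c
    using ser by unfold_locales
  show ?thesis
    using Tpoly_convolution Lambda_plus_acoef Lambda_generating_function by auto
qed

end
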